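(* Let $(X,d_X,m_X)$ and $(Y,d_Y,m_Y)$ be metric measure spaces and $p:X\to Y$ a 1-Lipschitz map with $p_*m_X=m_Y$, and let $\{\mu_y\}_{y\in Y}$ be the disintegration of $m_X$ for $p$. Assume there exists a Borel set $\Omega\subset Y$ with $m_Y(Y\setminus\Omega)=0$ such that $W_2(\mu_y,\mu_{y'})=d_Y(y,y')$ for all $y,y'\in\Omega$. Then $p$ is a submetry. In particular, $\{p^{-1}(y)\}_{y\in Y}$ is a metric measure foliation of $X$ and $Y$ is mm-isomorphic to the quotient space $X^*$.
   Context: A metric measure space $(X,d,m)$: complete separable metric space with Borel measure satisfying $0<m(B_r(x))<\infty$ for all $x$, $r>0$. The disintegration of $m_X$ for $p$ is the ($m_Y$-a.e. unique) family of Borel probability measures with $y\mapsto\mu_y(A)$ Borel, $\mu_y(X\setminus p^{-1}(y))=0$ for $m_Y$-a.e. $y$, and $\int f\,dm_X=\int\int f\,d\mu_y\,dm_Y(y)$ for Borel $f\ge0$. A map $p:X\to Y$ is a submetry if $p(B_r(x))=B_r(p(x))$ for all $x\in X$, $r>0$ (open balls). A metric foliation is a family of pairwise disjoint closed sets covering $X$ with $d(F,F')=d(x,F')$ for leaves $F,F'$, $x\in F$; its quotient $X^*$ has distance $d^*(y,y')=d(p^{-1}(y),p^{-1}(y'))$ and measure $m^*=p_*m$; it is a metric measure foliation if $m^*$ is locally finite and the disintegration of $m$ for the quotient map satisfies $W_2(\mu_y,\mu_{y'})=d^*(y,y')$ on a Borel set of full $m^*$-measure. mm-isomorphic means there is a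 measure-preserving isometry. *)

theory Defs
  imports "HOL-Probability.Probability"
begin

text \<open>A metric measure space: the underlying complete separable metric space is the
  type (class polish_space) with its distance; the measure is a Borel measure giving
  positive finite mass to every open ball.\<close>
definition mm_space :: "'a::polish_space measure \<Rightarrow> bool" where
  "mm_space m \<longleftrightarrow> sets m = sets (borel :: 'a measure) \<and>
     (\<forall>x r. r > 0 \<longrightarrow> 0 < emeasure m (ball x r) \<and> emeasure m (ball x r) < \<infinity>)"

definition disintegration ::
  "'a measure \<Rightarrow> 'b measure \<Rightarrow> ('a \<Rightarrow> 'b) \<Rightarrow> ('b \<Rightarrow> 'a measure) \<Rightarrow> bool" where
  "disintegration mX mY p \<mu> \<longleftrightarrow>
     (\<forall>y\<in>space mY. prob_space (\<mu> y) \<and> sets (\<mu> y) = sets mX) \<and>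
     (\<forall>A\<in>sets mX. (\<lambda>y. emeasure (\<mu> y) A) \<in> borel_measurable mY) \<and>
     (AE y in mY. emeasure (\<mu> y) (space mX - p -` {y}) = 0) \<and>
     (\<forall>f \<in> borel_measurable mX.
        (\<integral>\<^sup>+ x. f x \<partial>mX) = (\<integral>\<^sup>+ y. (\<integral>\<^sup>+ x. f x \<partial>(\<mu> y)) \<partial>mY))"

definition couplings :: "'a::polish_space measure \<Rightarrow> 'a measure \<Rightarrow> ('a \<times> 'a) measure set" where
  "couplings \<mu> \<nu> = {\<pi>. sets \<pi> = sets (borel :: ('a \<times> 'a) measure) \<and> prob_space \<pi> \<and>
      distr \<pi> borel fst = \<mu> \<and> distr \<pi> borel snd = \<nu>}"

definition W2_sq :: "'a::polish_space measure \<Rightarrow> 'a measure \<Rightarrow> ennreal" where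
  "W2_sq \<mu> \<nu> = (INF \<pi>\<in>couplings \<mu> \<nu>. \<integral>\<^sup>+ z. ennreal ((dist (fst z) (snd z))\<^sup>2) \<partial>\<pi>)"

definition W2 :: "'a::polish_space measure \<Rightarrow> 'a measure \<Rightarrow> ennreal" where
  "W2 \<mu> \<nu> = (if W2_sq \<mu> \<nu> = \<infinity> then \<infinity> else ennreal (sqrt (enn2real (W2_sq \<mu> \<nu>))))"

definition submetry :: "('a::metric_space \<Rightarrow> 'b::metric_space) \<Rightarrow> bool" where
  "submetry p \<longleftrightarrow> (\<forall>x r. r > 0 \<longrightarrow> p ` ball x r = ball (p x) r)"

definition metric_foliation :: "'a::metric_space set set \<Rightarrow> bool" where
  "metric_foliation P \<longleftrightarrow>
     (\<forall>F\<in>P. F \<noteq> {} \<and> closed F) \<and>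
     (\<forall>F\<in>P. \<forall>F'\<in>P. F \<noteq> F' \<longrightarrow> F \<inter> F' = {}) \<and>
     \<Union>P = UNIV \<and>
     (\<forall>F\<in>P. \<forall>F'\<in>P. \<forall>x\<in>F. setdist F F' = infdist x F')"

definition quot_map :: "'a set set \<Rightarrow> 'a \<Rightarrow> 'a set" where
  "quot_map P x = (THE F. F \<in> P \<and> x \<in> F)"

definition quot_borel :: "'a::metric_space set set \<Rightarrow> 'a set measure" where
  "quot_borel P = sigma P {U. openin (Metric_space.mtopology P setdist) U}"

definition quot_measure :: "'a::metric_space measure \<Rightarrow> 'a set set \<Rightarrow> 'a set measure" where
  "quot_measure m P = distr m (quot_borel P) (quot_map P)"

definition metric_measure_foliation :: "'a::polish_space measure \<Rightarrow> 'a set set \<Rightarrow> bool" where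
  "metric_measure_foliation m P \<longleftrightarrow>
     metric_foliation P \<and>
     (\<forall>F\<in>P. \<exists>r>0. emeasure (quot_measure m P) (Metric_space.mball P setdist F r) < \<infinity>) \<and>
     (\<exists>\<nu>. disintegration m (quot_measure m P) (quot_map P) \<nu> \<and>
        (\<exists>\<Omega>\<in>sets (quot_measure m P). emeasure (quot_measure m P) (P - \<Omega>) = 0 \<and>
           (\<forall>F\<in>\<Omega>. \<forall>F'\<in>\<Omega>. W2 (\<nu> F) (\<nu> F') = ennreal (setdist F F'))))"

definition mm_isomorphic ::
  "'a set \<Rightarrow> ('a \<Rightarrow> 'a \<Rightarrow> real) \<Rightarrow> 'a measure \<Rightarrow> 'b set \<Rightarrow> ('b \<Rightarrow> 'b \<Rightarrow> real) \<Rightarrow> 'b measure \<Rightarrow> bool" where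
  "mm_isomorphic A dA mA B dB mB \<longleftrightarrow>
     (\<exists>\<phi>. bij_betw \<phi> A B \<and> (\<forall>a\<in>A. \<forall>a'\<in>A. dB (\<phi> a) (\<phi> a') = dA a a') \<and>
          distr mA mB \<phi> = mB)"

end

theory Submission
  imports Defs
begin

text \<open>
  Lifting along p is first done approximately. Near x there is a point y of \<Omega> whose measure
  \<mu> y lives on the fibre of y and charges a small ball around x, and near the target there is
  another such point y2. Since p is 1-Lipschitz, any two points of these fibres are at distance
  at least d(y, y2); as W2(\<mu> y, \<mu> y2) = d(y, y2), a near-optimal coupling must charge pairs
  that start near x, end in the fibre of y2 and have length barely above d(y, y2).
  Approximate lifts with geometrically decreasing errors converge by completeness of X, so p is
  a submetry. The fibres of a submetry are equidistant, setdist (p -` {y}) (p -` {y'}) = d(y, y'),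
  so y \<mapsto> p -` {y} is an isometry of Y onto the quotient which pushes m_Y to the quotient
  measure, and the disintegration transfers along it.
\<close>

lemma nonexpansive_continuous_on:
  assumes "\<forall>x x'. dist (p x) (p x') \<le> dist x x'"
  shows "continuous_on S p"
  using assms by (intro lipschitz_on_continuous_on[of 1] lipschitz_onI) auto

lemma geometric_steps_convergent:
  fixes s :: "nat \<Rightarrow> 'a::complete_space"
  assumes steps: "\<And>n. dist (s n) (s (Suc n)) \<le> a * (1/2)^n"
  shows "\<exists>l. s \<longlonglongrightarrow> l \<and> dist (s 0) l \<le> 2 * a"
proof -
  have a: "a \<ge> 0" using order_trans[OF zero_le_dist steps[of 0]] by (simp only: power_0 mult_1_right)
  have partial: "dist (s m) (s (m + k)) \<le> 2 * a * (1/2)^m * (1 - (1/2)^k)" for m k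
  proof (induction k)
    case 0 then show ?case by simp
  next
    case (Suc k)
    have "dist (s m) (s (m + Suc k)) \<le> dist (s m) (s (m + k)) + dist (s (m + k)) (s (Suc (m + k)))"
      by (simp add: dist_triangle)
    also have "\<dots> \<le> 2 * a * (1/2)^m * (1 - (1/2)^k) + a * (1/2)^(m + k)"
      using Suc steps by (rule add_mono)
    also have "\<dots> = 2 * a * (1/2)^m * (1 - (1/2)^Suc k)"
      by (simp add: power_add algebra_simps)
    finally show ?case .
  qed
  have tail: "dist (s m) (s n) \<le> 2 * a * (1/2)^m" if mn: "m \<le> n" for m n
  proof -
    obtain k where nk: "n = m + k" using le_Suc_ex[OF mn] ..
    have "dist (s m) (s n) \<le> 2 * a * (1/2)^m * (1 - (1/2)^k)" unfolding nk by (rule partial)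
    also have "\<dots> \<le> 2 * a * (1/2)^m" using a by (intro mult_left_le) auto
    finally show ?thesis .
  qed
  have "(\<lambda>m. 2 * a * (1/2::real)^m) \<longlonglongrightarrow> 0"
    by (rule tendsto_mult_right_zero[OF LIMSEQ_power_zero]) simp
  have "Cauchy s"
  proof (rule metric_CauchyI)
    fix r :: real assume "r > 0"
    then obtain M where M: "2 * a * (1/2)^M < r / 2"
      using order_tendstoD(2)[OF \<open>(\<lambda>m. 2 * a * (1/2)^m) \<longlonglongrightarrow> 0\<close>, of "r/2"]
      by (auto simp: eventually_sequentially)
    show "\<exists>M. \<forall>m\<ge>M. \<forall>n\<ge>M. dist (s m) (s n) < r"
    proof (intro exI allI impI)
      fix m n assume "M \<le> m" "M \<le> n"
      then show "dist (s m) (s n) < r"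
        using dist_triangle3[of "s m" "s n" "s M"] tail[of M m] tail[of M n] M by linarith
    qed
  qed
  then obtain l where l: "s \<longlonglongrightarrow> l" using Cauchy_convergent_iff convergent_def by blast
  moreover have "dist (s 0) l \<le> 2 * a"
    using tail[of 0] by (intro LIMSEQ_le_const2[OF tendsto_dist[OF tendsto_const l]]) auto
  ultimately show ?thesis by blast
qed

lemma exact_lift_of_approximate_lift:
  fixes p :: "'a::complete_space \<Rightarrow> 'b::metric_space"
  assumes cont: "continuous_on UNIV p"
    and approx: "\<And>x y e. e > 0 \<Longrightarrow> \<exists>x'. dist x x' < dist (p x) y + e \<and> dist (p x') y < e"
    and "\<delta> > 0"
  shows "\<exists>x'. p x' = y \<and> dist x x' < dist (p x) y + \<delta>"
proof -
  define c where "c = \<delta> / 4"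
  define e :: "nat \<Rightarrow> real" where "e n = c * (1/2)^n" for n
  have e_pos: "e n > 0" for n using \<open>\<delta> > 0\<close> by (simp add: e_def c_def)
  define step where "step z n = (SOME x'. dist z x' < dist (p z) y + e n \<and> dist (p x') y < e n)" for z n
  have step: "dist z (step z n) < dist (p z) y + e n \<and> dist (p (step z n)) y < e n" for z n
    unfolding step_def by (rule someI_ex, rule approx, rule e_pos)
  define s where "s n = rec_nat x (\<lambda>n z. step z n) n" for n
  have s_0: "s 0 = x" and s_Suc: "s (Suc n) = step (s n) n" for n by (simp_all add: s_def)
  have near_y: "dist (p (s (Suc n))) y < e n" for n using step s_Suc by metis
  have steps: "dist (s (Suc n)) (s (Suc (Suc n))) \<le> (3 * c / 2) * (1/2)^n" for n
  proof -
    have "dist (s (Suc n)) (s (Suc (Suc n))) < dist (p (s (Suc n))) y + e (Suc n)"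
      using step[of "s (Suc n)" "Suc n"] s_Suc[of "Suc n"] by simp
    also have "\<dots> < e n + e (Suc n)" using near_y by simp
    also have "\<dots> = (3 * c / 2) * (1/2)^n" by (simp add: e_def)
    finally show ?thesis by simp
  qed
  obtain l where l: "(\<lambda>n. s (Suc n)) \<longlonglongrightarrow> l" and l_near: "dist (s 1) l \<le> 3 * c"
    using geometric_steps_convergent[of "\<lambda>n. s (Suc n)", OF steps] by auto
  have e_0: "e \<longlonglongrightarrow> 0" unfolding e_def by (rule tendsto_mult_right_zero[OF LIMSEQ_power_zero]) simp
  have "isCont p l" using cont by (simp add: continuous_on_eq_continuous_at)
  then have "(\<lambda>n. p (s (Suc n))) \<longlonglongrightarrow> p l" using l by (rule isCont_tendsto_compose)
  moreover have "(\<lambda>n. p (s (Suc n))) \<longlonglongrightarrow> y"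
  proof (rule tendsto_dist_iff[THEN iffD2], rule tendsto_sandwich[of "\<lambda>_. 0" _ sequentially e])
    show "\<forall>\<^sub>F n in sequentially. dist (p (s (Suc n))) y \<le> e n"
      using near_y by (intro always_eventually allI less_imp_le)
  qed (simp_all add: e_0)
  ultimately have "p l = y" by (rule LIMSEQ_unique)
  moreover have "dist x l < dist (p x) y + \<delta>"
  proof -
    have "dist x (s 1) < dist (p x) y + c"
      using step[of x 0] s_Suc[of 0] by (simp add: s_0 e_def)
    then show ?thesis using dist_triangle[of x l "s 1"] l_near by (simp add: c_def)
  qed
  ultimately show ?thesis by blast
qed

lemma W2_sq_eq_square:
  assumes "W2 \<mu> \<nu> = ennreal d" and "d \<ge> 0"
  shows "W2_sq \<mu> \<nu> = ennreal (d\<^sup>2)"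
proof (cases "W2_sq \<mu> \<nu> = \<infinity>")
  case True then show ?thesis using assms by (simp add: W2_def)
next
  case False
  then have "sqrt (enn2real (W2_sq \<mu> \<nu>)) = d" using assms by (simp add: W2_def)
  then have "enn2real (W2_sq \<mu> \<nu>) = d\<^sup>2" by (metis enn2real_nonneg real_sqrt_pow2)
  moreover have "ennreal (enn2real (W2_sq \<mu> \<nu>)) = W2_sq \<mu> \<nu>"
    using False by (simp add: less_top)
  ultimately show ?thesis by simp
qed

lemma
  fixes \<pi> :: "('a::polish_space \<times> 'a) measure"
  assumes "\<pi> \<in> couplings \<mu> \<nu>" and "A \<in> sets borel"
  shows coupling_emeasure_Times_UNIV: "emeasure \<pi> (A \<times> UNIV) = emeasure \<mu> A"
    and coupling_emeasure_UNIV_Times: "emeasure \<pi> (UNIV \<times> A) = emeasure \<nu> A"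
proof -
  have sets_\<pi>: "sets \<pi> = sets (borel :: ('a \<times> 'a) measure)"
    and marginals: "distr \<pi> borel fst = \<mu>" "distr \<pi> borel snd = \<nu>"
    using assms(1) by (auto simp: couplings_def)
  have space_\<pi>: "space \<pi> = UNIV" using sets_eq_imp_space_eq[OF sets_\<pi>] by simp
  have "fst \<in> measurable \<pi> borel" "snd \<in> measurable \<pi> borel"
    by (simp_all add: measurable_cong_sets[OF sets_\<pi> refl] borel_measurable_continuous_onI
        continuous_on_fst continuous_on_snd continuous_on_id)
  then show "emeasure \<pi> (A \<times> UNIV) = emeasure \<mu> A" "emeasure \<pi> (UNIV \<times> A) = emeasure \<nu> A"
    using assms(2) by (simp_all add: marginals[symmetric] emeasure_distr space_\<pi> vimage_fst vimage_snd)
qed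

lemma coupling_AE_fibres:
  fixes \<pi> :: "('a::polish_space \<times> 'a) measure" and p :: "'a \<Rightarrow> 'b::metric_space"
  assumes "\<pi> \<in> couplings \<mu>1 \<mu>2" and cont: "continuous_on UNIV p"
    and "emeasure \<mu>1 (UNIV - p -` {y1}) = 0" and "emeasure \<mu>2 (UNIV - p -` {y2}) = 0"
  shows "AE z in \<pi>. p (fst z) = y1 \<and> p (snd z) = y2"
proof -
  have sets_\<pi>: "sets \<pi> = sets (borel :: ('a \<times> 'a) measure)"
    using assms(1) by (simp add: couplings_def)
  have off_fibre: "open (UNIV - p -` {y})" for y
    by (intro open_Diff closed_vimage[OF closed_singleton cont]) simp
  have "(UNIV - p -` {y1}) \<times> UNIV \<in> null_sets \<pi>" "UNIV \<times> (UNIV - p -` {y2}) \<in> null_sets \<pi>"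
    using assms(3,4) by (simp_all add: null_sets_def sets_\<pi> off_fibre open_Times
        coupling_emeasure_Times_UNIV[OF assms(1)] coupling_emeasure_UNIV_Times[OF assms(1)])
  then have "(UNIV - p -` {y1}) \<times> UNIV \<union> UNIV \<times> (UNIV - p -` {y2}) \<in> null_sets \<pi>"
    by (rule null_sets.Un)
  then show ?thesis by (rule AE_I') auto
qed

lemma nn_integral_ge_level_set:
  assumes "prob_space M" and "AE x in M. c \<le> f x" and "c \<ge> 0" and "t \<ge> 0"
    and T: "{x \<in> space M. c + t \<le> f x} \<in> sets M"
  shows "ennreal c + ennreal t * emeasure M {x \<in> space M. c + t \<le> f x} \<le> (\<integral>\<^sup>+ x. ennreal (f x) \<partial>M)"
proof -
  let ?T = "{x \<in> space M. c + t \<le> f x}"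
  have "ennreal c + ennreal t * emeasure M ?T = (\<integral>\<^sup>+ x. ennreal c + ennreal t * indicator ?T x \<partial>M)"
    using T prob_space.emeasure_space_1[OF assms(1)]
    by (subst nn_integral_add) (auto simp: nn_integral_cmult_indicator)
  also have "\<dots> \<le> (\<integral>\<^sup>+ x. ennreal (f x) \<partial>M)"
  proof (rule nn_integral_mono_AE, use assms(2) in \<open>rule eventually_mono\<close>)
    fix x assume "c \<le> f x"
    then show "ennreal c + ennreal t * indicator ?T x \<le> ennreal (f x)"
      using assms(3,4) by (cases "x \<in> ?T")
        (auto simp: ennreal_plus[symmetric] ennreal_leI simp del: ennreal_plus)
  qed
  finally show ?thesis .
qed

lemma W2_eq_dist_near_pair:
  fixes \<mu>1 \<mu>2 :: "'a::polish_space measure" and p :: "'a \<Rightarrow> 'b::metric_space"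
  assumes lip: "\<forall>x x'. dist (p x) (p x') \<le> dist x x'" and cont: "continuous_on UNIV p"
    and "prob_space \<mu>1"
    and "emeasure \<mu>1 (UNIV - p -` {y1}) = 0" and "emeasure \<mu>2 (UNIV - p -` {y2}) = 0"
    and W: "W2 \<mu>1 \<mu>2 = ennreal (dist y1 y2)"
    and B: "B \<in> sets borel" and "emeasure \<mu>1 B > 0" and "t > 0"
  shows "\<exists>x1 x2. x1 \<in> B \<and> p x2 = y2 \<and> (dist x1 x2)\<^sup>2 < (dist y1 y2)\<^sup>2 + t"
proof (rule ccontr)
  assume far: "\<not> ?thesis"
  define d where "d = dist y1 y2"
  define \<beta> where "\<beta> = emeasure \<mu>1 B"
  define cost where
    "cost (\<pi> :: ('a \<times> 'a) measure) = (\<integral>\<^sup>+ z. ennreal ((dist (fst z) (snd z))\<^sup>2) \<partial>\<pi>)" for \<pi>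
  have "\<beta> \<noteq> \<infinity>"
    unfolding \<beta>_def
    using finite_measure.emeasure_finite[OF prob_space.finite_measure[OF assms(3)]] by simp
  then have "ennreal (d\<^sup>2) < ennreal (d\<^sup>2) + ennreal t * \<beta>"
    using \<open>t > 0\<close> assms(8)
    by (simp add: \<beta>_def ennreal_add_left_cancel_less[of _ 0, simplified] ennreal_zero_less_mult_iff)
  then have "(INF \<pi>\<in>couplings \<mu>1 \<mu>2. cost \<pi>) < ennreal (d\<^sup>2) + ennreal t * \<beta>"
    using W2_sq_eq_square[OF W] by (simp add: W2_sq_def cost_def d_def)
  then obtain \<pi> where \<pi>: "\<pi> \<in> couplings \<mu>1 \<mu>2"
    and cost_\<pi>: "cost \<pi> < ennreal (d\<^sup>2) + ennreal t * \<beta>"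
    by (auto simp: INF_less_iff)
  have sets_\<pi>: "sets \<pi> = sets (borel :: ('a \<times> 'a) measure)" and "prob_space \<pi>"
    using \<pi> by (auto simp: couplings_def)
  have space_\<pi>: "space \<pi> = UNIV" using sets_eq_imp_space_eq[OF sets_\<pi>] by simp
  define T where "T = {z \<in> space \<pi>. d\<^sup>2 + t \<le> (dist (fst z) (snd z))\<^sup>2}"
  have T: "T \<in> sets \<pi>" unfolding T_def sets_\<pi> space_\<pi>
    by (auto intro!: borel_closed closed_Collect_le continuous_intros)
  have fibres: "AE z in \<pi>. p (fst z) = y1 \<and> p (snd z) = y2"
    by (rule coupling_AE_fibres[OF \<pi> cont assms(4,5)])
  then have "AE z in \<pi>. d\<^sup>2 \<le> (dist (fst z) (snd z))\<^sup>2"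
    by (rule eventually_mono) (use lip in \<open>metis d_def power_mono zero_le_dist\<close>)
  then have "ennreal (d\<^sup>2) + ennreal t * emeasure \<pi> T \<le> cost \<pi>"
    unfolding T_def cost_def
    using \<open>t > 0\<close> T[unfolded T_def] by (intro nn_integral_ge_level_set[OF \<open>prob_space \<pi>\<close>]) auto
  also note cost_\<pi>
  finally have "ennreal t * emeasure \<pi> T < ennreal t * \<beta>"
    by (simp add: ennreal_add_left_cancel_less)
  then have "emeasure \<pi> T < \<beta>"
    by (metis linorder_not_le mult_left_mono zero_le)
  moreover have "\<beta> \<le> emeasure \<pi> T"
  proof -
    have "\<beta> = emeasure \<pi> (B \<times> UNIV)" using coupling_emeasure_Times_UNIV[OF \<pi> B] by (simp add: \<beta>_def)
    also have "\<dots> \<le> emeasure \<pi> T"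
    proof (rule emeasure_mono_AE[OF _ T], use fibres in \<open>rule eventually_mono\<close>)
      fix z :: "'a \<times> 'a" assume "p (fst z) = y1 \<and> p (snd z) = y2"
      then show "z \<in> B \<times> UNIV \<longrightarrow> z \<in> T" using far by (force simp: T_def d_def space_\<pi> not_less)
    qed
    finally show ?thesis .
  qed
  ultimately show False by simp
qed

lemma emeasure_pos_meets_conull:
  assumes "emeasure M B > 0" and "A \<in> sets M" and "emeasure M (space M - A) = 0"
  shows "B \<inter> A \<noteq> {}"
proof
  assume "B \<inter> A = {}"
  have "B \<in> sets M" using assms(1) emeasure_notin_sets by fastforce
  with \<open>B \<inter> A = {}\<close> have "B \<subseteq> space M - A" using sets.sets_into_space by blast
  then have "emeasure M B \<le> emeasure M (space M - A)" using assms(2) by (intro emeasure_mono) auto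
  with assms(1,3) show False by simp
qed

lemma disintegration_charges_ball:
  assumes mX: "mm_space mX" and dis: "disintegration mX mY p \<mu>" and "AE y in mY. G y" and "\<epsilon> > 0"
  shows "\<exists>y. G y \<and> emeasure (\<mu> y) (ball x \<epsilon>) > 0"
proof (rule ccontr)
  assume "\<not> ?thesis"
  then have "AE y in mY. emeasure (\<mu> y) (ball x \<epsilon>) = 0"
    using assms(3) by (auto elim!: eventually_mono)
  then have "(\<integral>\<^sup>+ y. emeasure (\<mu> y) (ball x \<epsilon>) \<partial>mY) = (\<integral>\<^sup>+ y. 0 \<partial>mY)"
    by (rule nn_integral_cong_AE)
  moreover have "emeasure mX (ball x \<epsilon>) = (\<integral>\<^sup>+ y. emeasure (\<mu> y) (ball x \<epsilon>) \<partial>mY)"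
  proof -
    have B: "ball x \<epsilon> \<in> sets mX" using mX by (simp add: mm_space_def)
    then have "emeasure mX (ball x \<epsilon>) = (\<integral>\<^sup>+ z. indicator (ball x \<epsilon>) z \<partial>mX)" by simp
    also have "\<dots> = (\<integral>\<^sup>+ y. (\<integral>\<^sup>+ z. indicator (ball x \<epsilon>) z \<partial>\<mu> y) \<partial>mY)"
      using dis B unfolding disintegration_def by (blast intro: borel_measurable_indicator)
    also have "\<dots> = (\<integral>\<^sup>+ y. emeasure (\<mu> y) (ball x \<epsilon>) \<partial>mY)"
      using dis B by (intro nn_integral_cong) (simp add: disintegration_def)
    finally show ?thesis .
  qed
  moreover have "emeasure mX (ball x \<epsilon>) > 0" using mX \<open>\<epsilon> > 0\<close> by (simp add: mm_space_def)
  ultimately show False by simp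
qed

lemma mm_space_AE_dense:
  assumes "mm_space m" and "AE y in m. G y" and "\<epsilon> > 0"
  shows "\<exists>y. G y \<and> dist y y' < \<epsilon>"
proof (rule ccontr)
  assume "\<not> ?thesis"
  then have "AE y in m. y \<notin> ball y' \<epsilon>"
    using assms(2) by (auto elim!: eventually_mono simp: dist_commute)
  then have "ball y' \<epsilon> \<in> null_sets m"
    using assms(1) by (subst AE_iff_null_sets) (auto simp: mm_space_def)
  moreover have "emeasure m (ball y' \<epsilon>) > 0" using assms(1,3) by (simp add: mm_space_def)
  ultimately show False by (simp add: null_sets_def)
qed

lemma approximate_lift_of_W2_eq_dist:
  fixes mX :: "'a::polish_space measure" and mY :: "'b::polish_space measure"
  assumes mX: "mm_space mX" and mY: "mm_space mY"
    and lip: "\<forall>x x'. dist (p x) (p x') \<le> dist x x'"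
    and dis: "disintegration mX mY p \<mu>"
    and "\<Omega> \<in> sets borel" and "emeasure mY (UNIV - \<Omega>) = 0"
    and W: "\<forall>y\<in>\<Omega>. \<forall>y'\<in>\<Omega>. W2 (\<mu> y) (\<mu> y') = ennreal (dist y y')"
    and "e > 0"
  shows "\<exists>x'. dist x x' < dist (p x) y' + e \<and> dist (p x') y' < e"
proof -
  define \<epsilon> where "\<epsilon> = e / 4"
  have "\<epsilon> > 0" using \<open>e > 0\<close> by (simp add: \<epsilon>_def)
  have cont: "continuous_on UNIV p" using lip by (rule nonexpansive_continuous_on)
  have sets_X: "sets mX = sets borel" and sets_Y: "sets mY = sets borel"
    using mX mY by (auto simp: mm_space_def)
  have space_X: "space mX = UNIV" and space_Y: "space mY = UNIV"
    using sets_eq_imp_space_eq[OF sets_X] sets_eq_imp_space_eq[OF sets_Y] by simp_all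
  have kernel: "prob_space (\<mu> y)" "sets (\<mu> y) = sets borel" for y
    using dis space_Y sets_X by (auto simp: disintegration_def)
  define good where "good y \<longleftrightarrow> y \<in> \<Omega> \<and> emeasure (\<mu> y) (UNIV - p -` {y}) = 0" for y
  have "AE y in mY. good y"
  proof -
    have "AE y in mY. emeasure (\<mu> y) (UNIV - p -` {y}) = 0"
      using dis space_X by (simp add: disintegration_def)
    moreover have "AE y in mY. y \<in> \<Omega>"
      by (rule AE_I'[of "UNIV - \<Omega>"]) (use assms(5,6) sets_Y space_Y in auto)
    ultimately show ?thesis unfolding good_def by eventually_elim auto
  qed
  then obtain y where y: "good y" and y_ball: "emeasure (\<mu> y) (ball x \<epsilon>) > 0"
    using disintegration_charges_ball[OF mX dis _ \<open>\<epsilon> > 0\<close>] by blast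
  have "p -` {y} \<in> sets (\<mu> y)" using kernel(2) cont by (simp add: closed_vimage borel_closed)
  then have "ball x \<epsilon> \<inter> p -` {y} \<noteq> {}"
    using y y_ball sets_eq_imp_space_eq[OF kernel(2)]
    by (intro emeasure_pos_meets_conull[OF y_ball]) (auto simp: good_def)
  then obtain x1 where "x1 \<in> ball x \<epsilon>" "p x1 = y" by blast
  then have y_near: "dist (p x) y < \<epsilon>" using lip by (metis le_less_trans mem_ball)
  obtain y2 where y2: "good y2" and y2_near: "dist y2 y' < \<epsilon>"
    using mm_space_AE_dense[OF mY \<open>AE y in mY. good y\<close> \<open>\<epsilon> > 0\<close>] by blast
  have "\<exists>z1 x2. z1 \<in> ball x \<epsilon> \<and> p x2 = y2 \<and> (dist z1 x2)\<^sup>2 < (dist y y2)\<^sup>2 + \<epsilon>\<^sup>2"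
    by (rule W2_eq_dist_near_pair[OF lip cont kernel(1)])
      (use y y2 W y_ball \<open>\<epsilon> > 0\<close> in \<open>auto simp: good_def\<close>)
  then obtain z1 x2 where z1: "dist x z1 < \<epsilon>" and x2: "p x2 = y2"
    and z1_x2: "(dist z1 x2)\<^sup>2 < (dist y y2)\<^sup>2 + \<epsilon>\<^sup>2"
    by auto
  have "(dist y y2)\<^sup>2 + \<epsilon>\<^sup>2 \<le> (dist y y2 + \<epsilon>)\<^sup>2" using \<open>\<epsilon> > 0\<close> by (simp add: power2_sum)
  with z1_x2 have "(dist z1 x2)\<^sup>2 < (dist y y2 + \<epsilon>)\<^sup>2" by linarith
  then have "dist z1 x2 < dist y y2 + \<epsilon>"
    by (rule power_less_imp_less_base) (use \<open>\<epsilon> > 0\<close> in simp)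
  moreover have "dist y y2 \<le> dist y (p x) + dist (p x) y' + dist y' y2"
    using dist_triangle[of y y2 "p x"] dist_triangle[of "p x" y2 y'] by linarith
  ultimately have "dist x x2 < dist (p x) y' + e"
    using dist_triangle[of x x2 z1] z1 y_near y2_near dist_commute[of y "p x"] dist_commute[of y' y2]
    unfolding \<epsilon>_def by linarith
  moreover have "dist (p x2) y' < e"
    using y2_near zero_le_dist[of y2 y'] unfolding x2 \<epsilon>_def by linarith
  ultimately show ?thesis by blast
qed

lemma submetryI_approximate_lift:
  fixes p :: "'a::complete_space \<Rightarrow> 'b::metric_space"
  assumes lip: "\<forall>x x'. dist (p x) (p x') \<le> dist x x'"
    and approx: "\<And>x y e. e > 0 \<Longrightarrow> \<exists>x'. dist x x' < dist (p x) y + e \<and> dist (p x') y < e"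
  shows "submetry p"
  unfolding submetry_def
proof (intro allI impI equalityI subsetI)
  fix x y and r :: real assume "r > 0"
  {
    assume "y \<in> p ` ball x r"
    then obtain x' where "dist x x' < r" "y = p x'" by auto
    then show "y \<in> ball (p x) r" using lip by (metis le_less_trans mem_ball)
  next
    assume "y \<in> ball (p x) r"
    then have "r - dist (p x) y > 0" by simp
    then obtain x' where "p x' = y" "dist x x' < dist (p x) y + (r - dist (p x) y)"
      using exact_lift_of_approximate_lift[OF nonexpansive_continuous_on[OF lip] approx] by blast
    then show "y \<in> p ` ball x r" by auto
  }
qed

lemma submetry_dist_le:
  assumes "submetry p"
  shows "dist (p x) (p x') \<le> dist x x'"
proof (rule field_le_epsilon)
  fix \<delta> :: real assume "\<delta> > 0"
  then have "p x' \<in> p ` ball x (dist x x' + \<delta>)" by simp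
  moreover have "dist x x' + \<delta> > 0" using \<open>\<delta> > 0\<close> by (simp add: add_nonneg_pos)
  ultimately have "p x' \<in> ball (p x) (dist x x' + \<delta>)" using assms by (simp add: submetry_def)
  then show "dist (p x) (p x') \<le> dist x x' + \<delta>" by simp
qed

lemma submetry_lift:
  assumes "submetry p" and "\<delta> > 0"
  shows "\<exists>x'. p x' = y \<and> dist x x' < dist (p x) y + \<delta>"
proof -
  have "dist (p x) y + \<delta> > 0" using \<open>\<delta> > 0\<close> by (simp add: add_nonneg_pos)
  then have "y \<in> p ` ball x (dist (p x) y + \<delta>)" using assms by (simp add: submetry_def)
  then show ?thesis by auto
qed

lemma submetry_fibre_nonempty:
  assumes "submetry p"
  shows "p -` {y} \<noteq> {}"
  using submetry_lift[OF assms zero_less_one, of y] by blast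

lemma submetry_inj_fibres:
  assumes "submetry p"
  shows "inj (\<lambda>y. p -` {y})"
proof (rule injI)
  fix y y' assume "p -` {y} = p -` {y'}"
  moreover obtain x where "p x = y" using submetry_fibre_nonempty[OF assms] by blast
  ultimately show "y = y'" by blast
qed

lemma submetry_infdist_fibre:
  assumes "submetry p" and "p x = y"
  shows "infdist x (p -` {y'}) = dist y y'"
proof (rule antisym)
  show "infdist x (p -` {y'}) \<le> dist y y'"
  proof (rule field_le_epsilon)
    fix \<delta> :: real assume "\<delta> > 0"
    then obtain x' where "p x' = y'" "dist x x' < dist (p x) y' + \<delta>"
      using submetry_lift[OF assms(1), where y=y' and x=x] by blast
    then show "infdist x (p -` {y'}) \<le> dist y y' + \<delta>"
      using infdist_le[of x' "p -` {y'}" x] assms(2) by simp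
  qed
  show "dist y y' \<le> infdist x (p -` {y'})"
    unfolding infdist_notempty[OF submetry_fibre_nonempty[OF assms(1)]]
  proof (rule cINF_greatest[OF submetry_fibre_nonempty[OF assms(1)]])
    fix x' assume "x' \<in> p -` {y'}"
    then show "dist y y' \<le> dist x x'" using submetry_dist_le[OF assms(1), of x x'] assms(2) by simp
  qed
qed

lemma submetry_setdist_fibres:
  assumes "submetry p"
  shows "setdist (p -` {y}) (p -` {y'}) = dist y y'"
  using submetry_fibre_nonempty[OF assms]
  by (simp add: setdist_eq_infdist submetry_infdist_fibre[OF assms])

lemma submetry_metric_foliation:
  assumes "submetry p"
  shows "metric_foliation (range (\<lambda>y. p -` {y}))"
  unfolding metric_foliation_def
proof (intro conjI ballI impI)
  have "continuous_on UNIV p"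
    using submetry_dist_le[OF assms] by (intro nonexpansive_continuous_on) blast
  then show "closed F" if "F \<in> range (\<lambda>y. p -` {y})" for F
    using that by (auto intro: closed_vimage[OF closed_singleton])
  show "F \<noteq> {}" if "F \<in> range (\<lambda>y. p -` {y})" for F
    using that submetry_fibre_nonempty[OF assms] by auto
  show "setdist F F' = infdist x F'"
    if "F \<in> range (\<lambda>y. p -` {y})" "F' \<in> range (\<lambda>y. p -` {y})" "x \<in> F" for F F' x
    using that by (auto simp: submetry_setdist_fibres[OF assms] submetry_infdist_fibre[OF assms])
qed auto

lemma quot_map_fibres: "quot_map (range (\<lambda>y. p -` {y})) x = p -` {p x}"
  unfolding quot_map_def by (rule the_equality) auto

lemma submetry_fibres_Metric_space:
  assumes "submetry p"
  shows "Metric_space (range (\<lambda>y. p -` {y})) setdist"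
proof
  fix F F' assume "F \<in> range (\<lambda>y. p -` {y})" "F' \<in> range (\<lambda>y. p -` {y})"
  then obtain y y' where "F = p -` {y}" "F' = p -` {y'}" by auto
  then show "setdist F F' = 0 \<longleftrightarrow> F = F'"
    using submetry_setdist_fibres[OF assms] submetry_inj_fibres[OF assms] by (auto dest: injD)
next
  fix F F' F''
  assume "F \<in> range (\<lambda>y. p -` {y})" "F' \<in> range (\<lambda>y. p -` {y})" "F'' \<in> range (\<lambda>y. p -` {y})"
  then obtain y y' y'' where "F = p -` {y}" "F' = p -` {y'}" "F'' = p -` {y''}" by auto
  then show "setdist F F'' \<le> setdist F F' + setdist F' F''"
    using submetry_setdist_fibres[OF assms] dist_triangle by simp
qed (simp_all add: setdist_sym)

lemma submetry_fibres_mball: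
  assumes "submetry p"
  shows "Metric_space.mball (range (\<lambda>y. p -` {y})) setdist (p -` {y}) r = (\<lambda>y. p -` {y}) ` ball y r"
  unfolding Metric_space.mball_def[OF submetry_fibres_Metric_space[OF assms]]
  by (auto simp: submetry_setdist_fibres[OF assms])

lemma submetry_fibres_openin:
  assumes "submetry p"
  shows "openin (Metric_space.mtopology (range (\<lambda>y. p -` {y})) setdist) U \<longleftrightarrow>
    U \<subseteq> range (\<lambda>y. p -` {y}) \<and> open ((\<lambda>y. p -` {y}) -` U)"
  unfolding Metric_space.openin_mtopology[OF submetry_fibres_Metric_space[OF assms]]
proof (intro iffI conjI; elim conjE)
  assume balls: "\<forall>F. F \<in> U \<longrightarrow> (\<exists>r>0. Metric_space.mball (range (\<lambda>y. p -` {y})) setdist F r \<subseteq> U)"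
  show "open ((\<lambda>y. p -` {y}) -` U)"
    unfolding open_contains_ball
  proof
    fix y assume "y \<in> (\<lambda>y. p -` {y}) -` U"
    then obtain r where "r > 0" "Metric_space.mball (range (\<lambda>y. p -` {y})) setdist (p -` {y}) r \<subseteq> U"
      using balls by auto
    then show "\<exists>r>0. ball y r \<subseteq> (\<lambda>y. p -` {y}) -` U"
      unfolding submetry_fibres_mball[OF assms] by blast
  qed
next
  assume U: "U \<subseteq> range (\<lambda>y. p -` {y})" and "open ((\<lambda>y. p -` {y}) -` U)"
  show "\<forall>F. F \<in> U \<longrightarrow> (\<exists>r>0. Metric_space.mball (range (\<lambda>y. p -` {y})) setdist F r \<subseteq> U)"
  proof (intro allI impI)
    fix F assume "F \<in> U"
    then obtain y where y: "F = p -` {y}" using U by blast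
    then have "y \<in> (\<lambda>y. p -` {y}) -` U" using \<open>F \<in> U\<close> by simp
    then obtain r where "r > 0" "ball y r \<subseteq> (\<lambda>y. p -` {y}) -` U"
      using \<open>open ((\<lambda>y. p -` {y}) -` U)\<close> open_contains_ball by blast
    then show "\<exists>r>0. Metric_space.mball (range (\<lambda>y. p -` {y})) setdist F r \<subseteq> U"
      unfolding y submetry_fibres_mball[OF assms] by blast
  qed
qed

lemma space_quot_borel: "space (quot_borel P) = P"
  by (simp add: quot_borel_def space_measure_of_conv)

lemma submetry_fibres_image_sets:
  assumes "submetry p" and "open S"
  shows "(\<lambda>y. p -` {y}) ` S \<in> sets (quot_borel (range (\<lambda>y. p -` {y})))"
  unfolding quot_borel_def
  by (rule in_measure_of)
    (use assms submetry_inj_fibres[OF assms(1)]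
      in \<open>auto simp: submetry_fibres_openin inj_vimage_image_eq\<close>)

lemma submetry_fibres_measurable:
  assumes "submetry p"
  shows "(\<lambda>y. p -` {y}) \<in> measurable borel (quot_borel (range (\<lambda>y. p -` {y})))"
  unfolding quot_borel_def
  by (rule measurable_measure_of) (auto simp: submetry_fibres_openin[OF assms])

text \<open>Unspecified unless F is a nonempty fibre of p.\<close>
definition fibre_base :: "('a \<Rightarrow> 'b) \<Rightarrow> 'a set \<Rightarrow> 'b" where
  "fibre_base p F = the_elem (p ` F)"

lemma fibre_base_fibre:
  assumes "p -` {y} \<noteq> {}"
  shows "fibre_base p (p -` {y}) = y"
proof -
  have "p ` (p -` {y}) = {y}" using assms by auto
  then show ?thesis by (simp add: fibre_base_def)
qed

lemma submetry_fibre_base_measurable: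
  assumes "submetry p"
  shows "fibre_base p \<in> borel_measurable (quot_borel (range (\<lambda>y. p -` {y})))"
proof (rule borel_measurableI)
  fix S :: "'b set" assume "open S"
  have "fibre_base p -` S \<inter> space (quot_borel (range (\<lambda>y. p -` {y}))) = (\<lambda>y. p -` {y}) ` S"
    using submetry_fibre_nonempty[OF assms] by (auto simp: space_quot_borel fibre_base_fibre)
  then show "fibre_base p -` S \<inter> space (quot_borel (range (\<lambda>y. p -` {y}))) \<in>
      sets (quot_borel (range (\<lambda>y. p -` {y})))"
    using submetry_fibres_image_sets[OF assms \<open>open S\<close>] by simp
qed

lemma submetry_quot_measure_fibres:
  assumes "submetry p" and "sets mX = sets borel" and "distr mX borel p = mY"
  shows "quot_measure mX (range (\<lambda>y. p -` {y})) =
    distr mY (quot_borel (range (\<lambda>y. p -` {y}))) (\<lambda>y. p -` {y})"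
proof -
  have p: "p \<in> measurable mX borel"
    using submetry_dist_le[OF assms(1)]
    by (simp add: measurable_cong_sets[OF assms(2) refl] borel_measurable_continuous_onI
        nonexpansive_continuous_on)
  have "distr mY (quot_borel (range (\<lambda>y. p -` {y}))) (\<lambda>y. p -` {y}) =
      distr mX (quot_borel (range (\<lambda>y. p -` {y}))) ((\<lambda>y. p -` {y}) \<circ> p)"
    using distr_distr[OF submetry_fibres_measurable[OF assms(1)] p] assms(3) by simp
  then show ?thesis
    unfolding quot_measure_def by (simp add: quot_map_fibres[abs_def] comp_def)
qed

lemma submetry_emeasure_quot_measure_image:
  assumes "submetry p" and "sets mX = sets borel" and "sets mY = sets borel"
    and "distr mX borel p = mY" and "A \<in> sets borel"
  shows "(\<lambda>y. p -` {y}) ` A \<in> sets (quot_measure mX (range (\<lambda>y. p -` {y})))"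
    and "emeasure (quot_measure mX (range (\<lambda>y. p -` {y}))) ((\<lambda>y. p -` {y}) ` A) = emeasure mY A"
proof -
  have "(\<lambda>y. p -` {y}) ` A = fibre_base p -` A \<inter> space (quot_borel (range (\<lambda>y. p -` {y})))"
    using submetry_fibre_nonempty[OF assms(1)] by (auto simp: space_quot_borel fibre_base_fibre)
  then show image_sets: "(\<lambda>y. p -` {y}) ` A \<in> sets (quot_measure mX (range (\<lambda>y. p -` {y})))"
    using measurable_sets[OF submetry_fibre_base_measurable[OF assms(1)] assms(5)]
    by (simp add: submetry_quot_measure_fibres[OF assms(1,2,4)])
  have "(\<lambda>y. p -` {y}) -` (\<lambda>y. p -` {y}) ` A \<inter> space mY = A"
    using submetry_inj_fibres[OF assms(1)] sets_eq_imp_space_eq[OF assms(3)]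
    by (simp add: inj_vimage_image_eq)
  moreover have "(\<lambda>y. p -` {y}) \<in> measurable mY (quot_borel (range (\<lambda>y. p -` {y})))"
    using submetry_fibres_measurable[OF assms(1)] by (simp add: measurable_cong_sets[OF assms(3) refl])
  ultimately show "emeasure (quot_measure mX (range (\<lambda>y. p -` {y}))) ((\<lambda>y. p -` {y}) ` A) = emeasure mY A"
    using image_sets by (simp add: submetry_quot_measure_fibres[OF assms(1,2,4)] emeasure_distr)
qed

lemma disintegration_pullback:
  assumes dis: "disintegration mX mY p \<mu>"
    and \<psi>: "\<psi> \<in> measurable Q mY" and image: "distr Q mY \<psi> = mY"
    and fibres: "\<And>F. F \<in> space Q \<Longrightarrow> q -` {F} = p -` {\<psi> F}"
  shows "disintegration mX Q q (\<lambda>F. \<mu> (\<psi> F))"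
proof -
  have kernel: "prob_space (\<mu> y)" "sets (\<mu> y) = sets mX" if "y \<in> space mY" for y
    using dis that by (auto simp: disintegration_def)
  have kernel_measurable: "(\<lambda>y. emeasure (\<mu> y) A) \<in> borel_measurable mY" if "A \<in> sets mX" for A
    using dis that by (auto simp: disintegration_def)
  have "\<mu> \<in> measurable mY (subprob_algebra mX)"
    by (rule measurable_subprob_algebra) (auto simp: kernel kernel_measurable prob_space_imp_subprob_space)
  have "AE F in Q. emeasure (\<mu> (\<psi> F)) (space mX - p -` {\<psi> F}) = 0"
  proof (rule AE_distrD[OF \<psi>])
    show "AE y in distr Q mY \<psi>. emeasure (\<mu> y) (space mX - p -` {y}) = 0"
      unfolding image using dis by (simp add: disintegration_def)
  qed
  then have "AE F in Q. emeasure (\<mu> (\<psi> F)) (space mX - q -` {F}) = 0"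
    by (rule AE_mp) (auto intro!: AE_I2 simp: fibres)
  moreover have "(\<integral>\<^sup>+ x. f x \<partial>mX) = (\<integral>\<^sup>+ F. (\<integral>\<^sup>+ x. f x \<partial>\<mu> (\<psi> F)) \<partial>Q)"
    if f: "f \<in> borel_measurable mX" for f
  proof -
    have "(\<lambda>y. \<integral>\<^sup>+ x. f x \<partial>\<mu> y) \<in> borel_measurable mY"
      using measurable_compose[OF \<open>\<mu> \<in> measurable mY (subprob_algebra mX)\<close>
          nn_integral_measurable_subprob_algebra[OF f]] by (simp add: comp_def)
    then have "(\<integral>\<^sup>+ F. (\<integral>\<^sup>+ x. f x \<partial>\<mu> (\<psi> F)) \<partial>Q) = (\<integral>\<^sup>+ y. (\<integral>\<^sup>+ x. f x \<partial>\<mu> y) \<partial>mY)"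
      using nn_integral_distr[OF \<psi>, of "\<lambda>y. \<integral>\<^sup>+ x. f x \<partial>\<mu> y"] by (simp add: image)
    also have "\<dots> = (\<integral>\<^sup>+ x. f x \<partial>mX)" using dis f by (simp add: disintegration_def)
    finally show ?thesis ..
  qed
  ultimately show ?thesis
    using kernel kernel_measurable measurable_space[OF \<psi>]
      measurable_compose[OF \<psi> kernel_measurable]
    by (auto simp: disintegration_def comp_def)
qed

lemma submetry_mm_isomorphic_quotient:
  assumes "submetry p" and "sets mX = sets borel" and "sets mY = sets borel"
    and "distr mX borel p = mY"
  shows "mm_isomorphic UNIV dist mY (range (\<lambda>y. p -` {y})) setdist
    (quot_measure mX (range (\<lambda>y. p -` {y})))"
  unfolding mm_isomorphic_def
proof (intro exI[of _ "\<lambda>y. p -` {y}"] conjI ballI)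
  show "bij_betw (\<lambda>y. p -` {y}) UNIV (range (\<lambda>y. p -` {y}))"
    using submetry_inj_fibres[OF assms(1)] by (simp add: bij_betw_def)
  show "setdist (p -` {y}) (p -` {y'}) = dist y y'" for y y'
    by (rule submetry_setdist_fibres[OF assms(1)])
  show "distr mY (quot_measure mX (range (\<lambda>y. p -` {y}))) (\<lambda>y. p -` {y}) =
      quot_measure mX (range (\<lambda>y. p -` {y}))"
    unfolding submetry_quot_measure_fibres[OF assms(1,2,4)] by (rule distr_cong) simp_all
qed

lemma submetry_disintegration_quotient:
  assumes sub: "submetry p" and sets_X: "sets mX = sets borel" and sets_Y: "sets mY = sets borel"
    and push: "distr mX borel p = mY" and dis: "disintegration mX mY p \<mu>"
  shows "disintegration mX (quot_measure mX (range (\<lambda>y. p -` {y})))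
    (quot_map (range (\<lambda>y. p -` {y}))) (\<lambda>F. \<mu> (fibre_base p F))"
proof (rule disintegration_pullback[OF dis])
  note Q_eq = submetry_quot_measure_fibres[OF sub sets_X push]
  show "fibre_base p \<in> measurable (quot_measure mX (range (\<lambda>y. p -` {y}))) mY"
    using submetry_fibre_base_measurable[OF sub]
    by (simp add: Q_eq measurable_cong_sets[OF refl sets_Y])
  have "distr (quot_measure mX (range (\<lambda>y. p -` {y}))) mY (fibre_base p) =
      distr mY mY (fibre_base p \<circ> (\<lambda>y. p -` {y}))"
    unfolding Q_eq using submetry_fibres_measurable[OF sub] submetry_fibre_base_measurable[OF sub]
    by (intro distr_distr)
      (simp_all add: measurable_cong_sets[OF sets_Y refl] measurable_cong_sets[OF refl sets_Y])
  also have "\<dots> = distr mY mY (\<lambda>y. y)"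
    using submetry_fibre_nonempty[OF sub] by (intro distr_cong) (simp_all add: fibre_base_fibre)
  finally show "distr (quot_measure mX (range (\<lambda>y. p -` {y}))) mY (fibre_base p) = mY"
    by (simp add: distr_id2)
  show "quot_map (range (\<lambda>y. p -` {y})) -` {F} = p -` {fibre_base p F}"
    if F: "F \<in> space (quot_measure mX (range (\<lambda>y. p -` {y})))" for F
  proof -
    obtain y where "F = p -` {y}" using F by (auto simp: Q_eq space_quot_borel)
    then show ?thesis
      using submetry_inj_fibres[OF sub] submetry_fibre_nonempty[OF sub]
      by (auto simp: quot_map_fibres fibre_base_fibre dest: injD)
  qed
qed

lemma submetry_metric_measure_foliation:
  fixes mX :: "'a::polish_space measure" and mY :: "'b::polish_space measure"
  assumes sub: "submetry p" and mX: "mm_space mX" and mY: "mm_space mY"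
    and push: "distr mX borel p = mY" and dis: "disintegration mX mY p \<mu>"
    and "\<Omega> \<in> sets borel" and "emeasure mY (UNIV - \<Omega>) = 0"
    and W: "\<forall>y\<in>\<Omega>. \<forall>y'\<in>\<Omega>. W2 (\<mu> y) (\<mu> y') = ennreal (dist y y')"
  shows "metric_measure_foliation mX (range (\<lambda>y. p -` {y}))"
proof -
  let ?\<phi> = "\<lambda>y. p -` {y}"
  let ?P = "range ?\<phi>" and ?Q = "quot_measure mX (range ?\<phi>)"
  have sets_X: "sets mX = sets borel" and sets_Y: "sets mY = sets borel"
    using mX mY by (auto simp: mm_space_def)
  note image_sets = submetry_emeasure_quot_measure_image(1)[OF sub sets_X sets_Y push]
    and image_emeasure = submetry_emeasure_quot_measure_image(2)[OF sub sets_X sets_Y push]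
  have locally_finite: "\<exists>r>0. emeasure ?Q (Metric_space.mball ?P setdist F r) < \<infinity>" if F: "F \<in> ?P" for F
  proof -
    obtain y where F: "F = p -` {y}" using F by auto
    have "emeasure ?Q (Metric_space.mball ?P setdist F 1) = emeasure mY (ball y 1)"
      unfolding F submetry_fibres_mball[OF sub] by (rule image_emeasure) simp
    also have "\<dots> < \<infinity>" using mY by (simp add: mm_space_def)
    finally show ?thesis by (intro exI[of _ 1]) simp
  qed
  have "?\<phi> ` \<Omega> \<in> sets ?Q" using image_sets assms(6) .
  moreover have "emeasure ?Q (?P - ?\<phi> ` \<Omega>) = 0"
  proof -
    have "?P - ?\<phi> ` \<Omega> = ?\<phi> ` (UNIV - \<Omega>)"
      using submetry_inj_fibres[OF sub] by (auto dest: injD)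
    then show ?thesis using image_emeasure[of "UNIV - \<Omega>"] assms(6,7) by auto
  qed
  moreover have "W2 (\<mu> (fibre_base p F)) (\<mu> (fibre_base p F')) = ennreal (setdist F F')"
    if "F \<in> ?\<phi> ` \<Omega>" "F' \<in> ?\<phi> ` \<Omega>" for F F'
    using that W submetry_fibre_nonempty[OF sub]
    by (auto simp: fibre_base_fibre submetry_setdist_fibres[OF sub])
  ultimately show ?thesis
    unfolding metric_measure_foliation_def
    using submetry_metric_foliation[OF sub] locally_finite
      submetry_disintegration_quotient[OF sub sets_X sets_Y push dis] by blast
qed

theorem lemma3p8:
  fixes mX :: "'a::polish_space measure" and mY :: "'b::polish_space measure"
    and p :: "'a \<Rightarrow> 'b" and \<mu> :: "'b \<Rightarrow> 'a measure" and \<Omega> :: "'b set"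
  assumes "mm_space mX" and "mm_space mY"
    and "\<forall>x x'. dist (p x) (p x') \<le> dist x x'"
    and "distr mX borel p = mY"
    and "disintegration mX mY p \<mu>"
    and "\<Omega> \<in> sets borel" and "emeasure mY (UNIV - \<Omega>) = 0"
    and "\<forall>y\<in>\<Omega>. \<forall>y'\<in>\<Omega>. W2 (\<mu> y) (\<mu> y') = ennreal (dist y y')"
  shows "submetry p \<and>
    metric_measure_foliation mX (range (\<lambda>y. p -` {y})) \<and>
    mm_isomorphic UNIV dist mY (range (\<lambda>y. p -` {y})) setdist
      (quot_measure mX (range (\<lambda>y. p -` {y})))"
proof -
  have sub: "submetry p"
  proof (rule submetryI_approximate_lift[OF assms(3)])
    fix x y and e :: real assume "e > 0"
    then show "\<exists>x'. dist x x' < dist (p x) y + e \<and> dist (p x') y < e"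
      by (rule approximate_lift_of_W2_eq_dist[OF assms(1,2,3,5,6,7,8)])
  qed
  have "sets mX = sets borel" and "sets mY = sets borel"
    using assms(1,2) by (auto simp: mm_space_def)
  then show ?thesis
    using sub submetry_metric_measure_foliation[OF sub assms(1,2,4-8)]
      submetry_mm_isomorphic_quotient[OF sub _ _ assms(4)] by blast
qed

end
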